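(* For all integers $m\ge 2$ and $k\ge 2$, $h(K(m,2,\ldots,2))=ch(K(m,2,\ldots,2))$, where $K(m,2,\ldots,2)$ denotes the complete $k$-partite graph with one part of size $m$ and $k-1$ parts of size $2$.
   Context: All graphs are finite and simple. A list assignment $L$ to a graph $G$ assigns a finite set $L(v)$ to each vertex $v$; a proper $L$-coloring is a map $\psi$ with $\psi(v)\in L(v)$ for all $v$ and $\psi(u)\ne\psi(v)$ for every edge $uv$. The choice number $ch(G)$ is the least $k$ such that $G$ is properly $L$-colorable whenever $|L(v)|\ge k$ for all $v$. For a subgraph $H$ of $G$ and a color $\sigma$, let $H_\sigma$ denote the subgraph of $H$ induced by $\{v\in V(H):\sigma\in L(v)\}$, and let $\alpha$ denote the independence number (with $\alpha$ of the null graph equal to $0$). $G$ and $L$ satisfy Hall's condition if $\sum_{\sigma}\alpha(H_\sigma)\ge |V(H)|$ for every subgraph $H$ of $G$, the sum being over all colors. The Hall number $h(G)$ is the smallest positive integer $k$ such that $G$ has a proper $L$-coloring whenever $G$ and $L$ satisfy Hall's condition and $|L(v)|\ge k$ for every $v\in V(G)$. *)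

theory Defs
  imports Main
begin

definition simple_graph :: "'a set \<Rightarrow> 'a set set \<Rightarrow> bool" where
  "simple_graph V E \<longleftrightarrow> finite V \<and> (\<forall>e\<in>E. e \<subseteq> V \<and> card e = 2)"

definition subgraph :: "'a set \<Rightarrow> 'a set set \<Rightarrow> 'a set \<Rightarrow> 'a set set \<Rightarrow> bool" where
  "subgraph W F V E \<longleftrightarrow> W \<subseteq> V \<and> F \<subseteq> E \<and> (\<forall>e\<in>F. e \<subseteq> W)"

definition independent :: "'a set set \<Rightarrow> 'a set \<Rightarrow> bool" where
  "independent E S \<longleftrightarrow> (\<forall>e\<in>E. \<not> e \<subseteq> S)"

text \<open>Independence number; equals 0 for the null graph.\<close>
definition indep_num :: "'a set \<Rightarrow> 'a set set \<Rightarrow> nat" where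
  "indep_num V E = Max {card S | S. S \<subseteq> V \<and> independent E S}"

definition proper_L_coloring ::
  "'a set \<Rightarrow> 'a set set \<Rightarrow> ('a \<Rightarrow> nat set) \<Rightarrow> ('a \<Rightarrow> nat) \<Rightarrow> bool" where
  "proper_L_coloring V E L \<psi> \<longleftrightarrow>
     (\<forall>v\<in>V. \<psi> v \<in> L v) \<and> (\<forall>u v. {u, v} \<in> E \<longrightarrow> \<psi> u \<noteq> \<psi> v)"

definition L_colorable :: "'a set \<Rightarrow> 'a set set \<Rightarrow> ('a \<Rightarrow> nat set) \<Rightarrow> bool" where
  "L_colorable V E L \<longleftrightarrow> (\<exists>\<psi>. proper_L_coloring V E L \<psi>)"

definition list_assignment_ge :: "'a set \<Rightarrow> ('a \<Rightarrow> nat set) \<Rightarrow> nat \<Rightarrow> bool" where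
  "list_assignment_ge V L k \<longleftrightarrow> (\<forall>v\<in>V. finite (L v) \<and> card (L v) \<ge> k)"

definition choice_number :: "'a set \<Rightarrow> 'a set set \<Rightarrow> nat" where
  "choice_number V E = (LEAST k. \<forall>L. list_assignment_ge V L k \<longrightarrow> L_colorable V E L)"

definition col_verts :: "'a set \<Rightarrow> ('a \<Rightarrow> nat set) \<Rightarrow> nat \<Rightarrow> 'a set" where
  "col_verts W L \<sigma> = {v\<in>W. \<sigma> \<in> L v}"

definition col_edges :: "'a set \<Rightarrow> 'a set set \<Rightarrow> ('a \<Rightarrow> nat set) \<Rightarrow> nat \<Rightarrow> 'a set set" where
  "col_edges W F L \<sigma> = {e\<in>F. e \<subseteq> col_verts W L \<sigma>}"

text \<open>Colours outside the lists of W contribute 0,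
  so the sum is taken over the (finite) union of the lists of W.\<close>
definition hall_condition :: "'a set \<Rightarrow> 'a set set \<Rightarrow> ('a \<Rightarrow> nat set) \<Rightarrow> bool" where
  "hall_condition V E L \<longleftrightarrow>
     (\<forall>W F. subgraph W F V E \<longrightarrow>
        (\<Sum>\<sigma>\<in>(\<Union>v\<in>W. L v). indep_num (col_verts W L \<sigma>) (col_edges W F L \<sigma>)) \<ge> card W)"

definition hall_number :: "'a set \<Rightarrow> 'a set set \<Rightarrow> nat" where
  "hall_number V E = (LEAST k. 0 < k \<and>
     (\<forall>L. hall_condition V E L \<and> list_assignment_ge V L k \<longrightarrow> L_colorable V E L))"

text \<open>K(m,2,...,2) with k parts: part 0 = {(0,i) | i<m}, parts j=1..k-1 = {(j,0),(j,1)};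
  two vertices are adjacent iff they lie in different parts.\<close>
definition Km2_V :: "nat \<Rightarrow> nat \<Rightarrow> (nat \<times> nat) set" where
  "Km2_V m k = {(0, i) | i. i < m} \<union> {(j, i) | j i. 0 < j \<and> j < k \<and> i < 2}"

definition Km2_E :: "nat \<Rightarrow> nat \<Rightarrow> (nat \<times> nat) set set" where
  "Km2_E m k = {{u, v} | u v. u \<in> Km2_V m k \<and> v \<in> Km2_V m k \<and> fst u \<noteq> fst v}"

end

theory Submission
  imports Defs
begin

(* Both numbers are least thresholds n, so it suffices that for n >= 1 "Hall's condition and
   lists of size n force a colouring" is equivalent to "lists of size n force a colouring".
   For n >= k this holds because K(m,2,...,2) is k-partite, and in a k-partite graph every
   assignment of k-lists satisfies Hall's condition. For 1 <= n < k both statements fail on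
   one assignment with lists of size at least k - 1 that satisfies Hall's condition but has
   no colouring: (0,0) gets {1..k}, (0,i) gets {1..k-1, k+1}, (j,0) gets {1..k-1} and
   (j,1) gets {2..k+1}. For this assignment the Hall inequality of a vertex set W follows
   from an explicit colouring of W unless W contains both vertices of every part of size 2
   and at least two vertices of part 0, including (0,0); in that case it follows by counting. *)

lemma card_eq_sum_card_fibers:
  assumes "finite S" "finite T" "f ` S \<subseteq> T"
  shows "card S = (\<Sum>y\<in>T. card {x\<in>S. f x = y})"
  using sum.group[OF assms, of "\<lambda>_. 1::nat"] by simp

lemma card_le_indep_num:
  assumes "finite V" "S \<subseteq> V" "independent E S"
  shows "card S \<le> indep_num V E"
  unfolding indep_num_def
proof (rule Max_ge)
  have "{card S |S. S \<subseteq> V \<and> independent E S} \<subseteq> card ` Pow V" by auto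
  then show "finite {card S |S. S \<subseteq> V \<and> independent E S}"
    using assms(1) by (meson finite_Pow_iff finite_imageI finite_subset)
  show "card S \<in> {card S |S. S \<subseteq> V \<and> independent E S}" using assms by auto
qed

lemma independent_if_constant:
  assumes "\<forall>e\<in>E. card e = 2" "\<forall>u v. {u, v} \<in> E \<longrightarrow> f u \<noteq> f v" "\<forall>v\<in>S. f v = c"
  shows "independent E S"
  unfolding independent_def
proof (intro ballI notI)
  fix e assume "e \<in> E" "e \<subseteq> S"
  moreover obtain u v where "e = {u, v}" using \<open>e \<in> E\<close> assms(1) card_2_iff by metis
  ultimately have "{u, v} \<in> E" "f u = f v" using assms(3) by auto
  then show False using assms(2) by blast
qed

lemma independent_col_edges: "independent F S \<Longrightarrow> independent (col_edges W F L \<sigma>) S"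
  by (auto simp: independent_def col_edges_def)

definition hall_sum :: "'a set \<Rightarrow> 'a set set \<Rightarrow> ('a \<Rightarrow> nat set) \<Rightarrow> nat" where
  "hall_sum W F L = (\<Sum>\<sigma>\<in>(\<Union>v\<in>W. L v). indep_num (col_verts W L \<sigma>) (col_edges W F L \<sigma>))"

lemma hall_condition_iff:
  "hall_condition V E L \<longleftrightarrow> (\<forall>W F. subgraph W F V E \<longrightarrow> card W \<le> hall_sum W F L)"
  by (simp add: hall_condition_def hall_sum_def)

lemma card_le_hall_sum_if_proper_coloring:
  assumes W: "finite W" and L: "\<forall>v\<in>W. finite (L v)" and F: "\<forall>e\<in>F. card e = 2"
    and \<psi>: "proper_L_coloring W F L \<psi>"
  shows "card W \<le> hall_sum W F L"
proof -
  let ?U = "\<Union>v\<in>W. L v"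
  have "\<psi> ` W \<subseteq> ?U" using \<psi> by (auto simp: proper_L_coloring_def)
  then have "card W = (\<Sum>\<sigma>\<in>?U. card {v\<in>W. \<psi> v = \<sigma>})"
    using W L by (intro card_eq_sum_card_fibers) auto
  also have "\<dots> \<le> hall_sum W F L"
    unfolding hall_sum_def
  proof (rule sum_mono, rule card_le_indep_num)
    fix \<sigma>
    show "finite (col_verts W L \<sigma>)" using W by (simp add: col_verts_def)
    show "{v\<in>W. \<psi> v = \<sigma>} \<subseteq> col_verts W L \<sigma>"
      using \<psi> by (auto simp: col_verts_def proper_L_coloring_def)
    have "\<forall>u v. {u, v} \<in> F \<longrightarrow> \<psi> u \<noteq> \<psi> v" using \<psi> by (simp add: proper_L_coloring_def)
    then have "independent F {v\<in>W. \<psi> v = \<sigma>}"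
      by (rule independent_if_constant[OF F, where c = \<sigma>]) simp
    then show "independent (col_edges W F L \<sigma>) {v\<in>W. \<psi> v = \<sigma>}"
      by (rule independent_col_edges)
  qed
  finally show ?thesis .
qed

lemma card_le_mult_indep_num:
  assumes "finite V" "p ` V \<subseteq> {..<k}" "\<forall>j<k. independent E {v\<in>V. p v = j}"
  shows "card V \<le> k * indep_num V E"
proof -
  have "card V = (\<Sum>j<k. card {v\<in>V. p v = j})"
    using assms by (intro card_eq_sum_card_fibers) auto
  also have "\<dots> \<le> (\<Sum>j<k. indep_num V E)"
    using assms by (intro sum_mono card_le_indep_num) auto
  finally show ?thesis by simp
qed

text \<open>Each \<open>H\<^sub>\<sigma>\<close> has at most \<open>k \<alpha>(H\<^sub>\<sigma>)\<close> vertices, so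
  \<open>k |W| \<le> \<Sum>\<^sub>v |L v| = \<Sum>\<^sub>\<sigma> |H\<^sub>\<sigma>| \<le> k \<Sum>\<^sub>\<sigma> \<alpha>(H\<^sub>\<sigma>)\<close>.\<close>
lemma hall_condition_if_partite:
  assumes G: "simple_graph V E" and p: "p ` V \<subseteq> {..<k}"
    and proper: "\<forall>u v. {u, v} \<in> E \<longrightarrow> p u \<noteq> p v" and L: "list_assignment_ge V L k"
  shows "hall_condition V E L"
  unfolding hall_condition_iff
proof (intro allI impI)
  fix W F assume "subgraph W F V E"
  then have WV: "W \<subseteq> V" and FE: "F \<subseteq> E" by (auto simp: subgraph_def)
  let ?U = "\<Union>v\<in>W. L v"
  let ?\<alpha> = "\<lambda>\<sigma>. indep_num (col_verts W L \<sigma>) (col_edges W F L \<sigma>)"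
  have W: "finite W" using G WV finite_subset by (auto simp: simple_graph_def)
  have LW: "\<forall>v\<in>W. finite (L v) \<and> k \<le> card (L v)" using L WV by (auto simp: list_assignment_ge_def)
  then have U: "finite ?U" using W by auto
  have F2: "\<forall>e\<in>F. card e = 2" using G FE by (auto simp: simple_graph_def)
  have "k * card W = (\<Sum>v\<in>W. k)" by simp
  also have "\<dots> \<le> (\<Sum>v\<in>W. card {\<sigma>\<in>?U. \<sigma> \<in> L v})"
  proof (rule sum_mono)
    fix v assume "v \<in> W"
    then have "{\<sigma>\<in>?U. \<sigma> \<in> L v} = L v" by blast
    then show "k \<le> card {\<sigma>\<in>?U. \<sigma> \<in> L v}" using LW \<open>v \<in> W\<close> by simp
  qed
  also have "\<dots> = (\<Sum>\<sigma>\<in>?U. card (col_verts W L \<sigma>))"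
    unfolding col_verts_def by (rule sum_multicount_gen[OF W U]) simp
  also have "\<dots> \<le> (\<Sum>\<sigma>\<in>?U. k * ?\<alpha> \<sigma>)"
  proof (rule sum_mono, rule card_le_mult_indep_num[where p = p])
    fix \<sigma>
    show "finite (col_verts W L \<sigma>)" using W by (simp add: col_verts_def)
    show "p ` col_verts W L \<sigma> \<subseteq> {..<k}" using p WV by (auto simp: col_verts_def)
    show "\<forall>j<k. independent (col_edges W F L \<sigma>) {v \<in> col_verts W L \<sigma>. p v = j}"
    proof (intro allI impI)
      fix j
      have "\<forall>u v. {u, v} \<in> F \<longrightarrow> p u \<noteq> p v" using proper FE by blast
      then have "independent F {v \<in> col_verts W L \<sigma>. p v = j}"
        by (rule independent_if_constant[OF F2, where c = j]) simp
      then show "independent (col_edges W F L \<sigma>) {v \<in> col_verts W L \<sigma>. p v = j}"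
        by (rule independent_col_edges)
    qed
  qed
  also have "\<dots> = k * hall_sum W F L" by (simp add: hall_sum_def sum_distrib_left)
  finally have "k * card W \<le> k * hall_sum W F L" .
  moreover have "k = 0 \<Longrightarrow> W = {}" using p WV by auto
  ultimately show "card W \<le> hall_sum W F L" by (cases "k = 0") auto
qed

definition choosable :: "'a set \<Rightarrow> 'a set set \<Rightarrow> nat \<Rightarrow> bool" where
  "choosable V E n \<longleftrightarrow> (\<forall>L. list_assignment_ge V L n \<longrightarrow> L_colorable V E L)"

definition hall_choosable :: "'a set \<Rightarrow> 'a set set \<Rightarrow> nat \<Rightarrow> bool" where
  "hall_choosable V E n \<longleftrightarrow>
     (\<forall>L. hall_condition V E L \<and> list_assignment_ge V L n \<longrightarrow> L_colorable V E L)"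

lemma choice_number_eq_Least_choosable: "choice_number V E = (LEAST n. choosable V E n)"
  by (simp add: choice_number_def choosable_def)

lemma hall_number_eq_Least_hall_choosable:
  "hall_number V E = (LEAST n. 0 < n \<and> hall_choosable V E n)"
  by (simp add: hall_number_def hall_choosable_def)

lemma choosable_imp_hall_choosable: "choosable V E n \<Longrightarrow> hall_choosable V E n"
  by (simp add: choosable_def hall_choosable_def)

lemma not_choosable_0:
  assumes "V \<noteq> {}"
  shows "\<not> choosable V E 0"
proof
  assume "choosable V E 0"
  moreover have "list_assignment_ge V (\<lambda>_. {}) 0" by (simp add: list_assignment_ge_def)
  ultimately have "L_colorable V E (\<lambda>_. {})" by (simp add: choosable_def)
  then show False using assms by (auto simp: L_colorable_def proper_L_coloring_def)
qed

lemma list_assignment_ge_mono: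
  "list_assignment_ge V L n \<Longrightarrow> k \<le> n \<Longrightarrow> list_assignment_ge V L k"
  by (auto simp: list_assignment_ge_def)

lemma hall_choosable_imp_choosable_if_partite:
  assumes "simple_graph V E" "p ` V \<subseteq> {..<k}" "\<forall>u v. {u, v} \<in> E \<longrightarrow> p u \<noteq> p v"
    and "k \<le> n" "hall_choosable V E n"
  shows "choosable V E n"
  unfolding choosable_def
proof (intro allI impI)
  fix L assume L: "list_assignment_ge V L n"
  then have "hall_condition V E L"
    using hall_condition_if_partite[OF assms(1-3)] list_assignment_ge_mono assms(4) by blast
  then show "L_colorable V E L" using assms(5) L by (simp add: hall_choosable_def)
qed

lemma mem_Km2_V [simp]:
  "v \<in> Km2_V m k \<longleftrightarrow> (fst v = 0 \<and> snd v < m) \<or> (0 < fst v \<and> fst v < k \<and> snd v < 2)"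
  by (cases v) (auto simp: Km2_V_def)

lemma finite_Km2_V: "finite (Km2_V m k)"
proof (rule finite_subset)
  show "Km2_V m k \<subseteq> {..<k + 1} \<times> {..<m + 2}" by auto
qed simp

lemma Km2_E_iff: "{u, v} \<in> Km2_E m k \<longleftrightarrow> u \<in> Km2_V m k \<and> v \<in> Km2_V m k \<and> fst u \<noteq> fst v"
proof
  assume "{u, v} \<in> Km2_E m k"
  then obtain a b where "{u, v} = {a, b}" "a \<in> Km2_V m k" "b \<in> Km2_V m k" "fst a \<noteq> fst b"
    unfolding Km2_E_def by blast
  then show "u \<in> Km2_V m k \<and> v \<in> Km2_V m k \<and> fst u \<noteq> fst v"
    by (auto simp: doubleton_eq_iff simp del: mem_Km2_V)
qed (unfold Km2_E_def, blast)

lemma simple_graph_Km2: "simple_graph (Km2_V m k) (Km2_E m k)"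
proof -
  have "e \<subseteq> Km2_V m k \<and> card e = 2" if e: "e \<in> Km2_E m k" for e
  proof -
    obtain u v where "e = {u, v}" "u \<in> Km2_V m k" "v \<in> Km2_V m k" "fst u \<noteq> fst v"
      using e unfolding Km2_E_def by blast
    moreover have "u \<noteq> v" using \<open>fst u \<noteq> fst v\<close> by blast
    ultimately show ?thesis by (simp del: mem_Km2_V)
  qed
  then show ?thesis by (simp add: simple_graph_def finite_Km2_V)
qed

lemma fst_Km2_V_less: "0 < k \<Longrightarrow> fst ` Km2_V m k \<subseteq> {..<k}"
  by auto

lemma hall_choosable_Km2_imp_choosable:
  "0 < k \<Longrightarrow> k \<le> n \<Longrightarrow> hall_choosable (Km2_V m k) (Km2_E m k) n \<Longrightarrow> choosable (Km2_V m k) (Km2_E m k) n"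
  by (rule hall_choosable_imp_choosable_if_partite[OF simple_graph_Km2 fst_Km2_V_less])
    (auto simp: Km2_E_iff)

lemma proper_coloring_Km2_adjacent:
  assumes "proper_L_coloring (Km2_V m k) (Km2_E m k) L \<psi>"
    and "u \<in> Km2_V m k" "v \<in> Km2_V m k" "fst u \<noteq> fst v"
  shows "\<psi> u \<noteq> \<psi> v"
  using assms Km2_E_iff unfolding proper_L_coloring_def by blast

definition Km2_hall_lists :: "nat \<Rightarrow> nat \<times> nat \<Rightarrow> nat set" where
  "Km2_hall_lists k v =
     (if fst v = 0 then (if snd v = 0 then {1..k} else insert (k + 1) {1..k - 1})
      else (if snd v = 0 then {1..k - 1} else {2..k + 1}))"

lemma list_assignment_ge_Km2_hall_lists: "list_assignment_ge V (Km2_hall_lists k) (k - 1)"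
  by (auto simp: list_assignment_ge_def Km2_hall_lists_def)

lemma proper_coloring_Km2_hall_lists_clique:
  assumes \<psi>: "proper_L_coloring (Km2_V m k) (Km2_E m k) (Km2_hall_lists k) \<psi>"
  shows "\<psi> ` (\<lambda>j. (j, 0)) ` {1..k - 1} = {1..k - 1}"
proof (rule card_subset_eq)
  let ?X = "(\<lambda>j. (j, 0::nat)) ` {1..k - 1}"
  note adj = proper_coloring_Km2_adjacent[OF \<psi>]
  have "inj_on \<psi> ?X"
  proof (rule inj_onI)
    fix u v assume "u \<in> ?X" "v \<in> ?X" "\<psi> u = \<psi> v"
    then show "u = v" using adj[of u v] by fastforce
  qed
  moreover have "inj_on (\<lambda>j. (j, 0::nat)) {1..k - 1}" by (simp add: inj_on_def)
  ultimately show "card (\<psi> ` ?X) = card {1..k - 1}" by (simp add: card_image)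
  show "\<psi> ` ?X \<subseteq> {1..k - 1}"
  proof
    fix c assume "c \<in> \<psi> ` ?X"
    then obtain j where j: "j \<in> {1..k - 1}" "c = \<psi> (j, 0)" by blast
    then have "(j, 0) \<in> Km2_V m k" by auto
    then have "\<psi> (j, 0) \<in> Km2_hall_lists k (j, 0)" using \<psi> by (simp add: proper_L_coloring_def)
    then show "c \<in> {1..k - 1}" using j by (simp add: Km2_hall_lists_def)
  qed
qed simp

text \<open>The clique \<open>(1,0), \<dots>, (k-1,0)\<close> uses up the colours \<open>1, \<dots>, k-1\<close>, which forces
  \<open>(0,0) \<mapsto> k\<close> and \<open>(0,1) \<mapsto> k+1\<close>; then the vertex \<open>(j,1)\<close> whose twin \<open>(j,0)\<close> has colour 1
  has no colour left.\<close>
lemma Km2_hall_lists_not_colorable: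
  assumes m: "2 \<le> m" and k: "2 \<le> k"
  shows "\<not> L_colorable (Km2_V m k) (Km2_E m k) (Km2_hall_lists k)"
proof
  assume "L_colorable (Km2_V m k) (Km2_E m k) (Km2_hall_lists k)"
  then obtain \<psi> where \<psi>: "proper_L_coloring (Km2_V m k) (Km2_E m k) (Km2_hall_lists k) \<psi>"
    unfolding L_colorable_def by blast
  have col: "\<psi> v \<in> Km2_hall_lists k v" if "v \<in> Km2_V m k" for v
    using \<psi> that by (simp add: proper_L_coloring_def)
  note adj = proper_coloring_Km2_adjacent[OF \<psi>]
  have clique: "\<exists>j\<in>{1..k - 1}. \<psi> (j, 0) = c" if "c \<in> {1..k - 1}" for c
  proof -
    have "c \<in> (\<lambda>j. \<psi> (j, 0)) ` {1..k - 1}"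
      using proper_coloring_Km2_hall_lists_clique[OF \<psi>] that by (simp add: image_image)
    then show ?thesis by force
  qed
  have part0: "\<psi> (0, i) \<notin> {1..k - 1}" if "i < m" for i
  proof
    assume "\<psi> (0, i) \<in> {1..k - 1}"
    then obtain j where j: "j \<in> {1..k - 1}" "\<psi> (j, 0) = \<psi> (0, i)" using clique by blast
    then have "(j, 0) \<in> Km2_V m k" "(0, i) \<in> Km2_V m k" using that by auto
    then show False using adj[of "(j, 0)" "(0, i)"] j by simp
  qed
  have v00: "(0, 0) \<in> Km2_V m k" and v01: "(0, 1) \<in> Km2_V m k" using m by auto
  have c00: "\<psi> (0, 0) = k" using col[OF v00] part0[of 0] m by (auto simp: Km2_hall_lists_def)
  have c01: "\<psi> (0, 1) = k + 1" using col[OF v01] part0[of 1] m by (auto simp: Km2_hall_lists_def)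
  have "(1::nat) \<in> {1..k - 1}" using k by simp
  then obtain j where j: "j \<in> {1..k - 1}" "\<psi> (j, 0) = 1" using clique by blast
  have vj1: "(j, 1) \<in> Km2_V m k" using j k by auto
  have "\<psi> (j, 1) \<in> {2..k + 1}" using col[OF vj1] j by (simp add: Km2_hall_lists_def)
  moreover have "\<psi> (j, 1) \<noteq> k" using adj[OF vj1 v00] c00 j by simp
  moreover have "\<psi> (j, 1) \<noteq> k + 1" using adj[OF vj1 v01] c01 j by simp
  ultimately have "\<psi> (j, 1) \<in> {1..k - 1}" "\<psi> (j, 1) \<noteq> 1" by auto
  then obtain i where i: "i \<in> {1..k - 1}" "\<psi> (i, 0) = \<psi> (j, 1)" using clique by blast
  then have "i \<noteq> j" using j \<open>\<psi> (j, 1) \<noteq> 1\<close> by auto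
  moreover have "(i, 0) \<in> Km2_V m k" using i k by auto
  ultimately show False using adj[OF _ vj1, of "(i, 0)"] i by simp
qed

definition cross_part_coloring ::
  "(nat \<times> nat) set \<Rightarrow> (nat \<times> nat \<Rightarrow> nat set) \<Rightarrow> (nat \<times> nat \<Rightarrow> nat) \<Rightarrow> bool" where
  "cross_part_coloring W L \<psi> \<longleftrightarrow>
     (\<forall>v\<in>W. \<psi> v \<in> L v) \<and> (\<forall>u\<in>W. \<forall>v\<in>W. fst u \<noteq> fst v \<longrightarrow> \<psi> u \<noteq> \<psi> v)"

lemma card_le_hall_sum_if_cross_part_coloring:
  assumes WF: "subgraph W F (Km2_V m k) (Km2_E m k)" and L: "\<forall>v\<in>W. finite (L v)"
    and \<psi>: "cross_part_coloring W L \<psi>"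
  shows "card W \<le> hall_sum W F L"
proof (rule card_le_hall_sum_if_proper_coloring[OF _ L])
  show "finite W" using WF finite_Km2_V finite_subset by (auto simp: subgraph_def)
  show "\<forall>e\<in>F. card e = 2"
    using WF simple_graph_Km2 by (auto simp: subgraph_def simple_graph_def)
  have "\<psi> u \<noteq> \<psi> v" if "{u, v} \<in> F" for u v
  proof -
    have "u \<in> W" "v \<in> W" "{u, v} \<in> Km2_E m k" using that WF by (auto simp: subgraph_def)
    then show ?thesis using \<psi> by (simp add: cross_part_coloring_def Km2_E_iff del: mem_Km2_V)
  qed
  then show "proper_L_coloring W F L \<psi>"
    using \<psi> by (simp add: proper_L_coloring_def cross_part_coloring_def)
qed

lemma Km2_hall_lists_coloring_if_pair_vertex_missing:
  assumes k: "2 \<le> k" and W: "W \<subseteq> Km2_V m k"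
    and j0: "0 < j0" "j0 < k" and i: "i < 2" "(j0, i) \<notin> W"
  shows "\<exists>\<psi>. cross_part_coloring W (Km2_hall_lists k) \<psi>"
proof -
  \<comment> \<open>maps the parts other than \<open>0\<close> and \<open>j0\<close> injectively into the colours \<open>{2..k-1}\<close>\<close>
  define shift where "shift j = (if j < j0 then j + 1 else j)" for j
  show ?thesis
  proof (cases "i = 0")
    case True
    let ?\<psi> = "\<lambda>v. if fst v = 0 then 1 else if fst v = j0 then k else shift (fst v)"
    have "cross_part_coloring W (Km2_hall_lists k) ?\<psi>"
      unfolding cross_part_coloring_def
    proof (intro conjI ballI impI)
      fix v assume v: "v \<in> W"
      then have "v \<noteq> (j0, 0)" using i True by auto
      then show "?\<psi> v \<in> Km2_hall_lists k v"
        using v W j0 k by (cases v) (auto simp: Km2_hall_lists_def shift_def)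
    next
      fix u v assume "u \<in> W" "v \<in> W" "fst u \<noteq> fst v"
      then show "?\<psi> u \<noteq> ?\<psi> v" using W j0 k by (auto simp: shift_def)
    qed
    then show ?thesis by blast
  next
    case False
    let ?\<psi> = "\<lambda>v. if fst v = 0 then (if snd v = 0 then k else k + 1)
                   else if fst v = j0 then 1 else shift (fst v)"
    have "cross_part_coloring W (Km2_hall_lists k) ?\<psi>"
      unfolding cross_part_coloring_def
    proof (intro conjI ballI impI)
      fix v assume v: "v \<in> W"
      then have "v \<noteq> (j0, 1)" using i False by (cases i) auto
      then show "?\<psi> v \<in> Km2_hall_lists k v"
        using v W j0 k by (cases v) (auto simp: Km2_hall_lists_def shift_def)
    next
      fix u v assume "u \<in> W" "v \<in> W" "fst u \<noteq> fst v"
      then show "?\<psi> u \<noteq> ?\<psi> v" using W j0 k by (auto simp: shift_def)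
    qed
    then show ?thesis by blast
  qed
qed

lemma Km2_hall_lists_coloring_if_part0_sparse:
  assumes k: "2 \<le> k" and W: "W \<subseteq> Km2_V m k"
    and part0: "(0, 0) \<notin> W \<or> (\<forall>i. 0 < i \<longrightarrow> (0, i) \<notin> W)"
  shows "\<exists>\<psi>. cross_part_coloring W (Km2_hall_lists k) \<psi>"
  using part0
proof
  assume "(0, 0) \<notin> W"
  let ?\<psi> = "\<lambda>v. if fst v = 0 then k + 1 else if fst v = 1 then (if snd v = 0 then 1 else k) else fst v"
  have "cross_part_coloring W (Km2_hall_lists k) ?\<psi>"
    unfolding cross_part_coloring_def
  proof (intro conjI ballI impI)
    fix v assume v: "v \<in> W"
    then have "v \<noteq> (0, 0)" using \<open>(0, 0) \<notin> W\<close> by auto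
    then show "?\<psi> v \<in> Km2_hall_lists k v"
      using v W k by (cases v) (auto simp: Km2_hall_lists_def)
  next
    fix u v assume "u \<in> W" "v \<in> W" "fst u \<noteq> fst v"
    then show "?\<psi> u \<noteq> ?\<psi> v" using W k by auto
  qed
  then show ?thesis by blast
next
  assume none: "\<forall>i. 0 < i \<longrightarrow> (0, i) \<notin> W"
  let ?\<psi> = "\<lambda>v. if fst v = 0 then k else if fst v = 1 then (if snd v = 0 then 1 else k + 1) else fst v"
  have "cross_part_coloring W (Km2_hall_lists k) ?\<psi>"
    unfolding cross_part_coloring_def
  proof (intro conjI ballI impI)
    fix v assume v: "v \<in> W"
    then have "fst v = 0 \<Longrightarrow> snd v = 0" using none by (cases v) auto
    then show "?\<psi> v \<in> Km2_hall_lists k v"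
      using v W k by (cases v) (auto simp: Km2_hall_lists_def)
  next
    fix u v assume "u \<in> W" "v \<in> W" "fst u \<noteq> fst v"
    then show "?\<psi> u \<noteq> ?\<psi> v" using W k by auto
  qed
  then show ?thesis by blast
qed

lemma independent_Km2_part:
  assumes "F \<subseteq> Km2_E m k" "\<forall>v\<in>S. fst v = j"
  shows "independent F S"
proof (rule independent_if_constant[where f = fst])
  show "\<forall>e\<in>F. card e = 2" using assms(1) simple_graph_Km2 by (auto simp: simple_graph_def)
  show "\<forall>u v. {u, v} \<in> F \<longrightarrow> fst u \<noteq> fst v"
    using assms(1) by (auto simp: Km2_E_iff simp del: mem_Km2_V)
qed (rule assms(2))

lemma card_Km2_subset_le:
  assumes W: "W \<subseteq> Km2_V m k"
  shows "card W \<le> card {v\<in>W. fst v = 0} + (k - 1) * 2"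
proof -
  have fin: "finite W" using W finite_Km2_V finite_subset by blast
  have "W \<subseteq> {v\<in>W. fst v = 0} \<union> {1..<k} \<times> {..<2}"
  proof
    fix v assume "v \<in> W"
    moreover from this have "v \<in> Km2_V m k" using W by blast
    ultimately show "v \<in> {v\<in>W. fst v = 0} \<union> {1..<k} \<times> {..<2}" by (cases v) auto
  qed
  then have "card W \<le> card ({v\<in>W. fst v = 0} \<union> {1..<k} \<times> {..<2})"
    by (intro card_mono) (simp_all add: fin)
  also have "\<dots> \<le> card {v\<in>W. fst v = 0} + card ({1..<k} \<times> {..<2::nat})" by (rule card_Un_le)
  also have "\<dots> = card {v\<in>W. fst v = 0} + (k - 1) * 2" by (simp add: card_cartesian_product)
  finally show ?thesis .
qed

text \<open>If \<open>W\<close> meets part 0 in at least two vertices \<open>W\<^sub>0\<close>, each colour \<open>1, \<dots>, k-1\<close> alone contributes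
  \<open>|W\<^sub>0|\<close> to the Hall sum and the colours \<open>k, k+1\<close> at least one each, while
  \<open>|W| \<le> |W\<^sub>0| + 2(k-1) \<le> (k-1)|W\<^sub>0| + 2\<close>.\<close>
lemma card_le_hall_sum_Km2_hall_lists_dense:
  assumes k: "2 \<le> k" and WF: "subgraph W F (Km2_V m k) (Km2_E m k)"
    and W: "(1, 1) \<in> W" "(0, 0) \<in> W" "(0, i) \<in> W" "0 < i"
  shows "card W \<le> hall_sum W F (Km2_hall_lists k)"
proof -
  let ?L = "Km2_hall_lists k"
  let ?W0 = "{v\<in>W. fst v = 0}"
  let ?\<alpha> = "\<lambda>\<sigma>. indep_num (col_verts W ?L \<sigma>) (col_edges W F ?L \<sigma>)"
  have WV: "W \<subseteq> Km2_V m k" and FE: "F \<subseteq> Km2_E m k" using WF by (auto simp: subgraph_def)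
  have fin: "finite W" using WV finite_Km2_V finite_subset by blast
  have part_le_\<alpha>: "card S \<le> ?\<alpha> \<sigma>" if "S \<subseteq> col_verts W ?L \<sigma>" "\<forall>v\<in>S. fst v = j" for S \<sigma> j
    using that fin by (intro card_le_indep_num independent_col_edges independent_Km2_part[OF FE])
      (auto simp: col_verts_def)
  have card_W: "card W \<le> card ?W0 + (k - 1) * 2" using card_Km2_subset_le[OF WV] .
  have "card {(0::nat, 0::nat), (0, i)} \<le> card ?W0" using W fin by (intro card_mono) auto
  then have card_W0: "2 \<le> card ?W0" using W by simp
  have "(\<Sum>\<sigma>\<in>{1..k - 1}. card ?W0) \<le> (\<Sum>\<sigma>\<in>{1..k - 1}. ?\<alpha> \<sigma>)"
    by (intro sum_mono part_le_\<alpha>) (auto simp: col_verts_def Km2_hall_lists_def)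
  then have low: "(k - 1) * card ?W0 \<le> (\<Sum>\<sigma>\<in>{1..k - 1}. ?\<alpha> \<sigma>)" by simp
  have one: "1 \<le> ?\<alpha> \<sigma>" if "\<sigma> \<in> {k, k + 1}" for \<sigma>
  proof -
    have "\<sigma> \<in> ?L (1, 1)" using that k by (auto simp: Km2_hall_lists_def)
    then have "{(1, 1)} \<subseteq> col_verts W ?L \<sigma>" using W(1) by (simp add: col_verts_def)
    then show ?thesis using part_le_\<alpha>[of "{(1, 1)}" \<sigma> 1] by simp
  qed
  have high: "2 \<le> (\<Sum>\<sigma>\<in>{k, k + 1}. ?\<alpha> \<sigma>)" using one[of k] one[of "k + 1"] by simp
  have "(\<Sum>\<sigma>\<in>{1..k - 1}. ?\<alpha> \<sigma>) + (\<Sum>\<sigma>\<in>{k, k + 1}. ?\<alpha> \<sigma>) \<le> hall_sum W F ?L"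
  proof -
    have "{1..k - 1} \<union> {k, k + 1} \<subseteq> (\<Union>v\<in>W. ?L v)"
      using W k by (auto simp: Km2_hall_lists_def)
    moreover have "finite (\<Union>v\<in>W. ?L v)" using fin by (simp add: Km2_hall_lists_def)
    ultimately show ?thesis
      unfolding hall_sum_def by (subst sum.union_disjoint[symmetric]) (auto intro: sum_mono2)
  qed
  with low high have "(k - 1) * card ?W0 + 2 \<le> hall_sum W F ?L" by linarith
  moreover have "card ?W0 + (k - 1) * 2 \<le> (k - 1) * card ?W0 + 2"
  proof -
    have "(k - 2) * 2 \<le> (k - 2) * card ?W0" using card_W0 by simp
    moreover have "k - 1 = Suc (k - 2)" using k by simp
    ultimately show ?thesis by simp
  qed
  ultimately show ?thesis using card_W by linarith
qed

lemma hall_condition_Km2_hall_lists: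
  assumes k: "2 \<le> k"
  shows "hall_condition (Km2_V m k) (Km2_E m k) (Km2_hall_lists k)"
  unfolding hall_condition_iff
proof (intro allI impI)
  fix W F assume WF: "subgraph W F (Km2_V m k) (Km2_E m k)"
  then have W: "W \<subseteq> Km2_V m k" by (simp add: subgraph_def)
  have fin: "\<forall>v\<in>W. finite (Km2_hall_lists k v)" by (simp add: Km2_hall_lists_def)
  consider (pair_vertex_missing) j i where "0 < j" "j < k" "i < 2" "(j, i) \<notin> W"
    | (part0_sparse) "(0, 0) \<notin> W \<or> (\<forall>i. 0 < i \<longrightarrow> (0, i) \<notin> W)"
    | (dense) i where "(1, 1) \<in> W" "(0, 0) \<in> W" "(0, i) \<in> W" "0 < i"
  proof (cases "\<forall>j i. 0 < j \<longrightarrow> j < k \<longrightarrow> i < 2 \<longrightarrow> (j, i) \<in> W")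
    case True
    then have "(1, 1) \<in> W" using k by simp
    then show ?thesis using that(2,3) by blast
  qed (use that(1) in blast)
  then show "card W \<le> hall_sum W F (Km2_hall_lists k)"
  proof cases
    case pair_vertex_missing
    then show ?thesis
      using Km2_hall_lists_coloring_if_pair_vertex_missing[OF k W]
        card_le_hall_sum_if_cross_part_coloring[OF WF fin] by blast
  next
    case part0_sparse
    then show ?thesis
      using Km2_hall_lists_coloring_if_part0_sparse[OF k W]
        card_le_hall_sum_if_cross_part_coloring[OF WF fin] by blast
  next
    case dense
    then show ?thesis using card_le_hall_sum_Km2_hall_lists_dense[OF k WF] by blast
  qed
qed

lemma not_hall_choosable_Km2_below:
  assumes m: "2 \<le> m" and k: "2 \<le> k" and n: "n < k"
  shows "\<not> hall_choosable (Km2_V m k) (Km2_E m k) n"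
proof
  assume "hall_choosable (Km2_V m k) (Km2_E m k) n"
  moreover have "list_assignment_ge (Km2_V m k) (Km2_hall_lists k) n"
    using n by (intro list_assignment_ge_mono[OF list_assignment_ge_Km2_hall_lists]) simp
  ultimately have "L_colorable (Km2_V m k) (Km2_E m k) (Km2_hall_lists k)"
    using hall_condition_Km2_hall_lists[OF k] by (simp add: hall_choosable_def)
  then show False using Km2_hall_lists_not_colorable[OF m k] by contradiction
qed

lemma hall_choosable_Km2_iff_choosable:
  assumes "2 \<le> m" "2 \<le> k"
  shows "hall_choosable (Km2_V m k) (Km2_E m k) n \<longleftrightarrow> choosable (Km2_V m k) (Km2_E m k) n"
proof (cases "k \<le> n")
  case True
  then show ?thesis
    using assms hall_choosable_Km2_imp_choosable choosable_imp_hall_choosable by auto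
next
  case False
  then have "\<not> hall_choosable (Km2_V m k) (Km2_E m k) n"
    using assms by (intro not_hall_choosable_Km2_below) simp_all
  then show ?thesis using choosable_imp_hall_choosable by blast
qed

theorem corollary4:
  fixes m k :: nat
  assumes "m \<ge> 2" and "k \<ge> 2"
  shows "hall_number (Km2_V m k) (Km2_E m k) = choice_number (Km2_V m k) (Km2_E m k)"
proof -
  have "(0, 0) \<in> Km2_V m k" using assms by simp
  then have "\<not> choosable (Km2_V m k) (Km2_E m k) 0" by (intro not_choosable_0) blast
  then have "(0 < n \<and> hall_choosable (Km2_V m k) (Km2_E m k) n) \<longleftrightarrow>
      choosable (Km2_V m k) (Km2_E m k) n" for n
    using hall_choosable_Km2_iff_choosable[OF assms] by (cases n) auto
  then show ?thesis
    by (simp add: hall_number_eq_Least_hall_choosable choice_number_eq_Least_choosable)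
qed

end
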